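(* Let $(\mathcal{S},\mathcal{T},d)$ be a lazy task system such that both $\mathcal{S}$ and $\mathcal{T}$ are finite. Then the online problem $(\mathcal{S},\mathcal{T},d)$ is compact.
   Context: A generalized task system $(\mathcal{S},\mathcal{T},d)$: a set $\mathcal{S}$ of states, a set $\mathcal{T}$ of tasks, each task $t:\mathcal{S}\to\mathbb{R}_{\ge0}\cup\{\infty\}$ having at least one state with $t(s)\neq\infty$, and a function $d:\mathcal{S}\times\mathcal{S}\to\mathbb{R}_{\geq0}$. An input is $(s_0,t_1,\dots,t_n)$ with initial state $s_0$ and tasks $t_i\in\mathcal{T}$; an online algorithm outputs states $s_1,\dots,s_n$, $s_i$ computed from $s_0,t_1,\dots,t_i$, with $t_i(s_i)\neq\infty$, paying $d(s_{i-1},s_i)+t_i(s_i)$ in round $i$; the cost is the sum. It is a lazy task system if additionally $d(s,s')>0$ for $s\neq s'$ and $d(s,s')\leq d(s,s'')+d(s'',s')$ for all states. Competitiveness: a randomized algorithm (probability distribution over deterministic algorithms) $R$ is $c$-competitive if there is a constant $\alpha$ (independent of the input, including $s_0$) with $\mathbb{E}[R(\sigma)]\le c\,\mathrm{OPT}(\sigma)+\alpha$ for all $\sigma$. A minimization problem is compact if, whenever $c>1$ is a constant such that every randomized algorithm has competitive ratio at least $c$, then for every $\varepsilon>0$ and $\alpha\geq0$ there is an input distribution $p_{\alpha,\varepsilon}$ with finite support such that $\mathbb{E}_{p_{\alpha,\varepsilon}}[D(\sigma)]\geq(c-\varepsilon)\mathbb{E}_{p_{\alpha,\varepsilon}}[\mathrm{OPT}(\sigma)]+\alpha$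 for every deterministic algorithm $D$ without advice. *)

theory Defs
  imports "HOL-Probability.Probability"
begin

type_synonym 's task = "'s \<Rightarrow> ennreal"

definition task_system :: "'s set \<Rightarrow> 's task set \<Rightarrow> ('s \<Rightarrow> 's \<Rightarrow> real) \<Rightarrow> bool" where
  "task_system S T d \<longleftrightarrow>
     (\<forall>t\<in>T. \<exists>s\<in>S. t s \<noteq> \<top>) \<and> (\<forall>s\<in>S. \<forall>s'\<in>S. d s s' \<ge> 0)"

definition lazy_task_system :: "'s set \<Rightarrow> 's task set \<Rightarrow> ('s \<Rightarrow> 's \<Rightarrow> real) \<Rightarrow> bool" where
  "lazy_task_system S T d \<longleftrightarrow> task_system S T d \<and>
     (\<forall>s\<in>S. \<forall>s'\<in>S. s \<noteq> s' \<longrightarrow> d s s' > 0) \<and>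
     (\<forall>s\<in>S. \<forall>s'\<in>S. \<forall>s''\<in>S. d s s' \<le> d s s'' + d s'' s')"

definition inputs :: "'s set \<Rightarrow> 's task set \<Rightarrow> ('s \<times> 's task list) set" where
  "inputs S T = {(s0, ts). s0 \<in> S \<and> set ts \<subseteq> T}"

text \<open>Cost of serving tasks ts from s0 with the state sequence ss (ss ! i is s_(i+1)).\<close>
definition path_cost :: "('s \<Rightarrow> 's \<Rightarrow> real) \<Rightarrow> 's \<Rightarrow> 's task list \<Rightarrow> 's list \<Rightarrow> ennreal" where
  "path_cost d s0 ts ss = (\<Sum>i<length ts. ennreal (d ((s0 # ss) ! i) (ss ! i)) + (ts ! i) (ss ! i))"

definition opt :: "'s set \<Rightarrow> ('s \<Rightarrow> 's \<Rightarrow> real) \<Rightarrow> 's \<times> 's task list \<Rightarrow> ennreal" where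
  "opt S d \<sigma> = (INF ss \<in> {ss. length ss = length (snd \<sigma>) \<and> set ss \<subseteq> S}.
                  path_cost d (fst \<sigma>) (snd \<sigma>) ss)"

text \<open>A deterministic online algorithm maps (s0, [t1,...,ti]) to the state s_i.
  Online-ness is built in: s_i depends only on s0 and the prefix t1..ti.\<close>
type_synonym 's det_alg = "'s \<times> 's task list \<Rightarrow> 's"

definition alg_states :: "'s det_alg \<Rightarrow> 's \<Rightarrow> 's task list \<Rightarrow> 's list" where
  "alg_states D s0 ts = map (\<lambda>i. D (s0, take (Suc i) ts)) [0..<length ts]"

definition alg_cost :: "('s \<Rightarrow> 's \<Rightarrow> real) \<Rightarrow> 's det_alg \<Rightarrow> 's \<times> 's task list \<Rightarrow> ennreal" where
  "alg_cost d D \<sigma> = path_cost d (fst \<sigma>) (snd \<sigma>) (alg_states D (fst \<sigma>) (snd \<sigma>))"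

definition valid_det :: "'s set \<Rightarrow> 's task set \<Rightarrow> 's det_alg \<Rightarrow> bool" where
  "valid_det S T D \<longleftrightarrow> (\<forall>s0\<in>S. \<forall>ts. set ts \<subseteq> T \<and> ts \<noteq> [] \<longrightarrow>
      D (s0, ts) \<in> S \<and> last ts (D (s0, ts)) \<noteq> \<top>)"

definition alg_space :: "'s det_alg measure" where
  "alg_space = PiM UNIV (\<lambda>_. count_space UNIV)"

definition rand_alg :: "'s set \<Rightarrow> 's task set \<Rightarrow> 's det_alg measure \<Rightarrow> bool" where
  "rand_alg S T M \<longleftrightarrow> prob_space M \<and> sets M = sets alg_space \<and> (AE D in M. valid_det S T D)"

definition rand_competitive ::
  "'s set \<Rightarrow> 's task set \<Rightarrow> ('s \<Rightarrow> 's \<Rightarrow> real) \<Rightarrow> 's det_alg measure \<Rightarrow> real \<Rightarrow> bool" where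
  "rand_competitive S T d M c \<longleftrightarrow>
     (\<exists>\<alpha>::real. \<alpha> \<ge> 0 \<and> (\<forall>\<sigma>\<in>inputs S T.
        (\<integral>\<^sup>+ D. alg_cost d D \<sigma> \<partial>M) \<le> ennreal c * opt S d \<sigma> + ennreal \<alpha>))"

definition compact_problem :: "'s set \<Rightarrow> 's task set \<Rightarrow> ('s \<Rightarrow> 's \<Rightarrow> real) \<Rightarrow> bool" where
  "compact_problem S T d \<longleftrightarrow>
     (\<forall>c::real. c > 1 \<and>
        (\<forall>M. rand_alg S T M \<longrightarrow> (\<forall>c'<c. \<not> rand_competitive S T d M c')) \<longrightarrow>
        (\<forall>\<epsilon>::real. \<epsilon> > 0 \<longrightarrow> (\<forall>\<alpha>::real. \<alpha> \<ge> 0 \<longrightarrow>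
          (\<exists>p :: ('s \<times> 's task list) pmf. finite (set_pmf p) \<and> set_pmf p \<subseteq> inputs S T \<and>
             (\<forall>D. valid_det S T D \<longrightarrow>
                measure_pmf.expectation p (\<lambda>\<sigma>. enn2real (alg_cost d D \<sigma>))
                  \<ge> (c - \<epsilon>) * measure_pmf.expectation p (\<lambda>\<sigma>. enn2real (opt S d \<sigma>)) + \<alpha>)))))"

end

theory Submission
  imports Defs
begin

text \<open>Suppose no finitely supported input distribution forces every deterministic algorithm to
  pay \<open>(c - \<epsilon>) OPT + \<alpha>\<close>. Describe randomized algorithms by fractional flows \<open>\<pi>\<close>, where
  \<open>\<pi> (s0, ts, x, z)\<close> is the probability of being in \<open>x\<close> before and in \<open>z\<close> after the last task
  of \<open>ts\<close>. Flows form a compact convex set on which the expected cost of each input is affine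
  and continuous, and deterministic algorithms are the integral flows. For the finitely many
  inputs of length at most \<open>n\<close> a minimax argument yields a flow that is \<open>(c - \<epsilon>)\<close>-competitive
  on all of them; by compactness one flow works for all inputs. Sampling its transitions step
  by step is a randomized algorithm of ratio \<open>c - \<epsilon>\<close>, contradicting the lower bound \<open>c\<close>.\<close>

definition feasible_state :: "'s set \<Rightarrow> 's task \<Rightarrow> 's" where
  "feasible_state S t = (SOME s. s \<in> S \<and> t s \<noteq> \<top>)"

definition repair_state :: "'s set \<Rightarrow> 's task \<Rightarrow> 's \<Rightarrow> 's" where
  "repair_state S t y = (if y \<in> S \<and> t y \<noteq> \<top> then y else feasible_state S t)"

lemma feasible_state_feasible:
  "task_system S T d \<Longrightarrow> t \<in> T \<Longrightarrow> feasible_state S t \<in> S \<and> t (feasible_state S t) \<noteq> \<top>"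
  unfolding feasible_state_def task_system_def by (rule someI_ex) blast

lemma task_system_dist_nonneg: "task_system S T d \<Longrightarrow> x \<in> S \<Longrightarrow> z \<in> S \<Longrightarrow> 0 \<le> d x z"
  unfolding task_system_def by blast

subsection \<open>Algorithms driven by a stream of choice functions\<close>

text \<open>A history \<open>(s0, ts, x)\<close> records the initial state, the tasks revealed so far and the current
  state.\<close>

type_synonym 's history = "'s \<times> 's task list \<times> 's"

fun choice_run ::
  "'s set \<Rightarrow> ('s history \<Rightarrow> 's) stream \<Rightarrow> 's \<Rightarrow> 's task list \<Rightarrow> 's \<Rightarrow> 's task list \<Rightarrow> 's" where
  "choice_run S gs s0 pre x [] = x"
| "choice_run S gs s0 pre x (t # rest) =
     choice_run S (stl gs) s0 (pre @ [t]) (repair_state S t (shd gs (s0, pre @ [t], x))) rest"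

fun choice_cost :: "'s set \<Rightarrow> ('s \<Rightarrow> 's \<Rightarrow> real) \<Rightarrow> ('s history \<Rightarrow> 's) stream \<Rightarrow>
    's \<Rightarrow> 's task list \<Rightarrow> 's \<Rightarrow> 's task list \<Rightarrow> ennreal" where
  "choice_cost S d gs s0 pre x [] = 0"
| "choice_cost S d gs s0 pre x (t # rest) = (let y = repair_state S t (shd gs (s0, pre @ [t], x)) in
     ennreal (d x y) + t y + choice_cost S d (stl gs) s0 (pre @ [t]) y rest)"

definition choice_alg :: "'s set \<Rightarrow> ('s history \<Rightarrow> 's) stream \<Rightarrow> 's det_alg" where
  "choice_alg S gs = (\<lambda>(s0, ts). choice_run S gs s0 [] s0 ts)"

lemma path_cost_choice_run:
  "path_cost d x rest (map (\<lambda>i. choice_run S gs s0 pre x (take (Suc i) rest)) [0..<length rest])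
     = choice_cost S d gs s0 pre x rest"
proof (induction rest arbitrary: gs pre x)
  case Nil
  then show ?case by (simp add: path_cost_def)
next
  case (Cons t rest)
  define y where "y = repair_state S t (shd gs (s0, pre @ [t], x))"
  have states: "map (\<lambda>i. choice_run S gs s0 pre x (take (Suc i) (t # rest))) [0..<length (t # rest)]
     = y # map (\<lambda>i. choice_run S (stl gs) s0 (pre @ [t]) y (take (Suc i) rest)) [0..<length rest]"
    by (simp add: y_def map_upt_Suc del: upt_Suc)
  have IH: "path_cost d y rest
      (map (\<lambda>i. choice_run S (stl gs) s0 (pre @ [t]) y (take (Suc i) rest)) [0..<length rest])
     = choice_cost S d (stl gs) s0 (pre @ [t]) y rest"
    using Cons.IH .
  show ?case
    unfolding states path_cost_def
    using IH unfolding path_cost_def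
    by (simp only: length_Cons sum.lessThan_Suc_shift) (simp add: y_def Let_def)
qed

lemma alg_cost_choice_alg: "alg_cost d (choice_alg S gs) (s0, ts) = choice_cost S d gs s0 [] s0 ts"
  unfolding alg_cost_def alg_states_def choice_alg_def
  using path_cost_choice_run[of d s0 ts S gs s0 "[]"] by simp

lemma choice_run_feasible:
  assumes "task_system S T d" "set rest \<subseteq> T" "rest \<noteq> []"
  shows "choice_run S gs s0 pre x rest \<in> S \<and> last rest (choice_run S gs s0 pre x rest) \<noteq> \<top>"
  using assms(2,3)
proof (induction rest arbitrary: gs pre x)
  case Nil
  then show ?case by simp
next
  case (Cons t rest)
  then show ?case
    using feasible_state_feasible[OF assms(1), of t] by (cases "rest = []") (auto simp: repair_state_def)
qed

lemma valid_det_choice_alg: "task_system S T d \<Longrightarrow> valid_det S T (choice_alg S gs)"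
  unfolding valid_det_def choice_alg_def using choice_run_feasible by fastforce

text \<open>Drawing the choice functions independently, coordinatewise from \<open>\<beta>\<close>, makes the choice
  in every history an independent \<open>\<beta>\<close>-distributed random state.\<close>

definition choice_space :: "('s history \<Rightarrow> 's pmf) \<Rightarrow> ('s history \<Rightarrow> 's) measure" where
  "choice_space \<beta> = PiM UNIV (\<lambda>j. measure_pmf (\<beta> j))"

lemma prob_space_choice_space: "prob_space (choice_space \<beta>)"
  unfolding choice_space_def by (intro prob_space_PiM prob_space_measure_pmf)

lemma measurable_count_space_finite_range:
  assumes "f \<in> measurable M (count_space UNIV)" "finite R" "\<And>x. x \<in> space M \<Longrightarrow> f x \<in> R"
  shows "f \<in> measurable M (count_space R)"
proof -
  have "f -` {a} \<inter> space M \<in> sets M" for a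
    using measurable_sets[OF assms(1), of "{a}"] by simp
  then show ?thesis using assms(2,3) by (auto simp: measurable_count_space_eq2)
qed

lemma measurable_shd_apply:
  "(\<lambda>gs. shd gs j) \<in> measurable (stream_space (choice_space \<beta>)) (count_space UNIV)"
proof -
  have "(\<lambda>g. g j) \<in> measurable (choice_space \<beta>) (measure_pmf (\<beta> j))"
    unfolding choice_space_def by (rule measurable_component_singleton) simp
  from measurable_compose[OF measurable_shd this] show ?thesis by simp
qed

lemma measurable_repair_shd:
  assumes "finite S"
  shows "(\<lambda>gs. repair_state S t (shd gs j))
    \<in> measurable (stream_space (choice_space \<beta>)) (count_space (insert (feasible_state S t) S))"
  by (rule measurable_count_space_finite_range, rule measurable_compose[OF measurable_shd_apply])
     (auto simp: assms repair_state_def)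

lemma measurable_choice_run:
  assumes "finite S"
  shows "(\<lambda>gs. choice_run S gs s0 pre x rest)
    \<in> measurable (stream_space (choice_space \<beta>)) (count_space UNIV)"
proof (induction rest arbitrary: pre x)
  case Nil
  then show ?case by simp
next
  case (Cons t rest)
  have "(\<lambda>gs. (\<lambda>y gs. choice_run S (stl gs) s0 (pre @ [t]) y rest)
      (repair_state S t (shd gs (s0, pre @ [t], x))) gs)
     \<in> measurable (stream_space (choice_space \<beta>)) (count_space UNIV)"
    by (rule measurable_compose_countable'[OF _ measurable_repair_shd[OF assms]])
       (use measurable_compose[OF measurable_stl Cons.IH] assms countable_finite in auto)
  then show ?case by simp
qed

lemma measurable_choice_cost:
  assumes "finite S"
  shows "(\<lambda>gs. choice_cost S d gs s0 pre x rest) \<in> borel_measurable (stream_space (choice_space \<beta>))"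
proof (induction rest arbitrary: pre x)
  case Nil
  then show ?case by simp
next
  case (Cons t rest)
  have "(\<lambda>gs. (\<lambda>y gs. ennreal (d x y) + t y + choice_cost S d (stl gs) s0 (pre @ [t]) y rest)
      (repair_state S t (shd gs (s0, pre @ [t], x))) gs) \<in> borel_measurable (stream_space (choice_space \<beta>))"
  proof (rule measurable_compose_countable'[OF _ measurable_repair_shd[OF assms]])
    fix y
    have "(\<lambda>gs. choice_cost S d (stl gs) s0 (pre @ [t]) y rest) \<in> borel_measurable (stream_space (choice_space \<beta>))"
      using measurable_compose[OF measurable_stl Cons.IH] by simp
    then show "(\<lambda>gs. ennreal (d x y) + t y + choice_cost S d (stl gs) s0 (pre @ [t]) y rest)
        \<in> borel_measurable (stream_space (choice_space \<beta>))"
      by measurable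
  qed (simp add: assms countable_finite)
  then show ?case by (simp add: Let_def)
qed

lemma nn_integral_choice_space_component:
  "(\<integral>\<^sup>+g. H (g j) \<partial>choice_space \<beta>) = (\<integral>\<^sup>+z. H z \<partial>measure_pmf (\<beta> j))"
proof -
  have "(\<integral>\<^sup>+z. H z \<partial>measure_pmf (\<beta> j)) = (\<integral>\<^sup>+z. H z \<partial>distr (choice_space \<beta>) (measure_pmf (\<beta> j)) (\<lambda>g. g j))"
    unfolding choice_space_def by (subst distr_PiM_component) (auto intro: prob_space_measure_pmf)
  also have "\<dots> = (\<integral>\<^sup>+g. H (g j) \<partial>choice_space \<beta>)"
    by (rule nn_integral_distr) (auto simp: choice_space_def intro: measurable_component_singleton)
  finally show ?thesis ..
qed

lemma nn_integral_choice_cost_Cons: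
  assumes "finite S"
  shows "(\<integral>\<^sup>+gs. choice_cost S d gs s0 pre x (t # rest) \<partial>stream_space (choice_space \<beta>))
    = (\<integral>\<^sup>+z. ennreal (d x (repair_state S t z)) + t (repair_state S t z) +
          (\<integral>\<^sup>+gs. choice_cost S d gs s0 (pre @ [t]) (repair_state S t z) rest \<partial>stream_space (choice_space \<beta>))
        \<partial>measure_pmf (\<beta> (s0, pre @ [t], x)))" (is "_ = ?rhs")
proof -
  interpret G: prob_space "choice_space \<beta>" by (rule prob_space_choice_space)
  interpret GS: prob_space "stream_space (choice_space \<beta>)" by (rule G.prob_space_stream_space)
  have "(\<integral>\<^sup>+gs. choice_cost S d gs s0 pre x (t # rest) \<partial>stream_space (choice_space \<beta>))
     = (\<integral>\<^sup>+g. (\<integral>\<^sup>+gs. choice_cost S d (g ## gs) s0 pre x (t # rest) \<partial>stream_space (choice_space \<beta>)) \<partial>choice_space \<beta>)"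
    by (rule G.nn_integral_stream_space[OF measurable_choice_cost[OF assms]])
  also have "\<dots> = (\<integral>\<^sup>+g. (\<lambda>z. ennreal (d x (repair_state S t z)) + t (repair_state S t z) +
        (\<integral>\<^sup>+gs. choice_cost S d gs s0 (pre @ [t]) (repair_state S t z) rest \<partial>stream_space (choice_space \<beta>)))
      (g (s0, pre @ [t], x)) \<partial>choice_space \<beta>)"
    by (intro nn_integral_cong)
       (simp add: Let_def nn_integral_add measurable_choice_cost[OF assms] GS.emeasure_space_1)
  also have "\<dots> = ?rhs" by (rule nn_integral_choice_space_component)
  finally show ?thesis .
qed


subsection \<open>Fractional flows\<close>

text \<open>A flow assigns to \<open>(s0, ts, x, z)\<close> the probability of being in \<open>x\<close> before and in \<open>z\<close>
  after serving the last task of \<open>ts\<close>; \<open>state_mass\<close> is the resulting distribution of the state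
  after \<open>ts\<close>.\<close>

type_synonym 's flow = "'s \<times> 's task list \<times> 's \<times> 's \<Rightarrow> real"

definition state_mass :: "'s set \<Rightarrow> 's flow \<Rightarrow> 's \<Rightarrow> 's task list \<Rightarrow> 's \<Rightarrow> real" where
  "state_mass S \<pi> s0 ts z = (if ts = [] then (if z = s0 then 1 else 0) else (\<Sum>y\<in>S. \<pi> (s0, ts, y, z)))"

definition flow :: "'s set \<Rightarrow> 's task set \<Rightarrow> 's flow \<Rightarrow> bool" where
  "flow S T \<pi> \<longleftrightarrow> (\<forall>i. 0 \<le> \<pi> i \<and> \<pi> i \<le> 1) \<and>
    (\<forall>s0\<in>S. \<forall>pre t. set pre \<subseteq> T \<longrightarrow> t \<in> T \<longrightarrow>
       (\<forall>x\<in>S. (\<Sum>z\<in>S. \<pi> (s0, pre @ [t], x, z)) = state_mass S \<pi> s0 pre x)) \<and>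
    (\<forall>s0\<in>S. \<forall>pre t. set pre \<subseteq> T \<longrightarrow> t \<in> T \<longrightarrow>
       (\<forall>x\<in>S. \<forall>z\<in>S. t z = \<top> \<longrightarrow> \<pi> (s0, pre @ [t], x, z) = 0))"

text \<open>Infeasible moves carry no mass in a flow, so truncating \<open>\<top>\<close> to \<open>0\<close> with \<open>enn2real\<close> in
  \<open>flow_cost\<close> is harmless.\<close>

definition flow_cost :: "'s set \<Rightarrow> ('s \<Rightarrow> 's \<Rightarrow> real) \<Rightarrow> 's flow \<Rightarrow> 's \<Rightarrow> 's task list \<Rightarrow> 's task list \<Rightarrow> real" where
  "flow_cost S d \<pi> s0 pre rest = (\<Sum>i<length rest. \<Sum>x\<in>S. \<Sum>z\<in>S.
      \<pi> (s0, pre @ take (Suc i) rest, x, z) * (d x z + enn2real ((rest ! i) z)))"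

lemma flow_cost_Nil [simp]: "flow_cost S d \<pi> s0 pre [] = 0"
  by (simp add: flow_cost_def)

lemma flow_cost_Cons: "flow_cost S d \<pi> s0 pre (t # rest) =
   (\<Sum>x\<in>S. \<Sum>z\<in>S. \<pi> (s0, pre @ [t], x, z) * (d x z + enn2real (t z))) + flow_cost S d \<pi> s0 (pre @ [t]) rest"
  unfolding flow_cost_def by (simp only: length_Cons sum.lessThan_Suc_shift) simp

lemma flow_nonneg: "flow S T \<pi> \<Longrightarrow> 0 \<le> \<pi> i"
  unfolding flow_def by (elim conjE) (rule conjunct1, erule spec)

lemma flow_le_one: "flow S T \<pi> \<Longrightarrow> \<pi> i \<le> 1"
  unfolding flow_def by (elim conjE) (rule conjunct2, erule spec)

lemma flow_conservation:
  "flow S T \<pi> \<Longrightarrow> s0 \<in> S \<Longrightarrow> set pre \<subseteq> T \<Longrightarrow> t \<in> T \<Longrightarrow> x \<in> S \<Longrightarrow>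
    (\<Sum>z\<in>S. \<pi> (s0, pre @ [t], x, z)) = state_mass S \<pi> s0 pre x"
  unfolding flow_def by blast

lemma flow_infeasible_zero:
  "flow S T \<pi> \<Longrightarrow> s0 \<in> S \<Longrightarrow> set pre \<subseteq> T \<Longrightarrow> t \<in> T \<Longrightarrow> x \<in> S \<Longrightarrow> z \<in> S \<Longrightarrow> t z = \<top> \<Longrightarrow>
    \<pi> (s0, pre @ [t], x, z) = 0"
  unfolding flow_def by blast

lemma state_mass_nonneg: "flow S T \<pi> \<Longrightarrow> 0 \<le> state_mass S \<pi> s0 ts z"
  unfolding state_mass_def by (auto intro: sum_nonneg flow_nonneg)

lemma flow_cost_nonneg:
  assumes "task_system S T d" "flow S T \<pi>"
  shows "0 \<le> flow_cost S d \<pi> s0 pre rest"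
  unfolding flow_cost_def
  by (intro sum_nonneg mult_nonneg_nonneg add_nonneg_nonneg flow_nonneg[OF assms(2)]
      task_system_dist_nonneg[OF assms(1)] enn2real_nonneg)

text \<open>Histories of zero mass are never reached; there the kernel makes an arbitrary feasible choice.\<close>

definition flow_choice :: "'s set \<Rightarrow> 's task set \<Rightarrow> 's flow \<Rightarrow> 's history \<Rightarrow> 's pmf" where
  "flow_choice S T \<pi> = (\<lambda>(s0, ts, x).
     if s0 \<in> S \<and> ts \<noteq> [] \<and> set ts \<subseteq> T \<and> x \<in> S \<and> state_mass S \<pi> s0 (butlast ts) x > 0
     then embed_pmf (\<lambda>z. if z \<in> S then \<pi> (s0, ts, x, z) / state_mass S \<pi> s0 (butlast ts) x else 0)
     else return_pmf (feasible_state S (last ts)))"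

lemma flow_choice:
  assumes ts: "task_system S T d" and fin: "finite S" and fl: "flow S T \<pi>"
    and s0: "s0 \<in> S" and pre: "set pre \<subseteq> T" and t: "t \<in> T" and x: "x \<in> S"
  shows "set_pmf (flow_choice S T \<pi> (s0, pre @ [t], x)) \<subseteq> {z\<in>S. t z \<noteq> \<top>}"
    and "\<And>z. z \<in> S \<Longrightarrow>
      state_mass S \<pi> s0 pre x * pmf (flow_choice S T \<pi> (s0, pre @ [t], x)) z = \<pi> (s0, pre @ [t], x, z)"
proof -
  define m where "m = state_mass S \<pi> s0 pre x"
  define \<beta> where "\<beta> = flow_choice S T \<pi> (s0, pre @ [t], x)"
  have nn: "\<And>i. 0 \<le> \<pi> i" using fl by (rule flow_nonneg)
  have sumz: "(\<Sum>z\<in>S. \<pi> (s0, pre @ [t], x, z)) = m"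
    unfolding m_def by (rule flow_conservation[OF fl s0 pre t x])
  have zero: "\<And>z. z \<in> S \<Longrightarrow> t z = \<top> \<Longrightarrow> \<pi> (s0, pre @ [t], x, z) = 0"
    by (rule flow_infeasible_zero[OF fl s0 pre t x])
  have "set_pmf \<beta> \<subseteq> {z\<in>S. t z \<noteq> \<top>} \<and> (\<forall>z\<in>S. m * pmf \<beta> z = \<pi> (s0, pre @ [t], x, z))"
  proof (cases "m > 0")
    case True
    define f where "f = (\<lambda>z. if z \<in> S then \<pi> (s0, pre @ [t], x, z) / m else 0)"
    have \<beta>: "\<beta> = embed_pmf f"
      using True s0 pre t x unfolding \<beta>_def flow_choice_def f_def m_def by (simp cong: if_cong)
    have fnn: "\<And>z. 0 \<le> f z" unfolding f_def using nn True by simp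
    have "(\<integral>\<^sup>+z. ennreal (f z) \<partial>count_space UNIV) = (\<Sum>z\<in>S. ennreal (f z))"
      by (rule nn_integral_count_space') (auto simp: fin f_def)
    also have "\<dots> = ennreal (\<Sum>z\<in>S. f z)"
      using fnn by simp
    also have "(\<Sum>z\<in>S. f z) = (\<Sum>z\<in>S. \<pi> (s0, pre @ [t], x, z)) / m"
      unfolding f_def by (simp add: sum_divide_distrib)
    finally have int1: "(\<integral>\<^sup>+z. ennreal (f z) \<partial>count_space UNIV) = 1"
      using sumz True by simp
    have "set_pmf \<beta> = {z. f z \<noteq> 0}"
      unfolding \<beta> by (rule set_embed_pmf[OF fnn int1])
    then show ?thesis
      using zero True unfolding \<beta> pmf_embed_pmf[OF fnn int1] by (auto simp: f_def)
  next
    case False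
    then have "m = 0" using state_mass_nonneg[OF fl] unfolding m_def by (simp add: not_less order.antisym)
    moreover have "\<beta> = return_pmf (feasible_state S t)"
      using False unfolding \<beta>_def flow_choice_def m_def by auto
    moreover have "\<forall>z\<in>S. \<pi> (s0, pre @ [t], x, z) = 0"
      using sumz \<open>m = 0\<close> nn fin by (simp add: sum_nonneg_eq_0_iff)
    ultimately show ?thesis using feasible_state_feasible[OF ts t] by simp
  qed
  then show "set_pmf (flow_choice S T \<pi> (s0, pre @ [t], x)) \<subseteq> {z\<in>S. t z \<noteq> \<top>}"
    and "\<And>z. z \<in> S \<Longrightarrow> m * pmf (flow_choice S T \<pi> (s0, pre @ [t], x)) z = \<pi> (s0, pre @ [t], x, z)"
    unfolding \<beta>_def by auto
qed

lemma expected_choice_cost_Cons: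
  assumes ts: "task_system S T d" and fin: "finite S" and fl: "flow S T \<pi>"
    and s0: "s0 \<in> S" and pre: "set pre \<subseteq> T" and t: "t \<in> T" and x: "x \<in> S"
  defines "\<beta> \<equiv> flow_choice S T \<pi>"
  shows "(\<integral>\<^sup>+gs. choice_cost S d gs s0 pre x (t # rest) \<partial>stream_space (choice_space \<beta>))
    = (\<Sum>z\<in>S. (ennreal (d x z) + t z +
         (\<integral>\<^sup>+gs. choice_cost S d gs s0 (pre @ [t]) z rest \<partial>stream_space (choice_space \<beta>)))
       * ennreal (pmf (\<beta> (s0, pre @ [t], x)) z))"
proof -
  define H where "H = (\<lambda>z. ennreal (d x z) + t z +
    (\<integral>\<^sup>+gs. choice_cost S d gs s0 (pre @ [t]) z rest \<partial>stream_space (choice_space \<beta>)))"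
  have supp: "set_pmf (\<beta> (s0, pre @ [t], x)) \<subseteq> {z\<in>S. t z \<noteq> \<top>}"
    unfolding \<beta>_def by (rule flow_choice(1)[OF ts fin fl s0 pre t x])
  have "(\<integral>\<^sup>+gs. choice_cost S d gs s0 pre x (t # rest) \<partial>stream_space (choice_space \<beta>))
      = (\<integral>\<^sup>+z. H (repair_state S t z) \<partial>measure_pmf (\<beta> (s0, pre @ [t], x)))"
    unfolding H_def by (rule nn_integral_choice_cost_Cons[OF fin])
  also have "\<dots> = (\<Sum>z\<in>S. H (repair_state S t z) * pmf (\<beta> (s0, pre @ [t], x)) z)"
    by (rule nn_integral_measure_pmf_support) (use fin supp in auto)
  also have "\<dots> = (\<Sum>z\<in>S. H z * pmf (\<beta> (s0, pre @ [t], x)) z)"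
    \<comment> \<open>the kernel only chooses feasible states, which need no repair\<close>
  proof (intro sum.cong refl)
    fix z assume "z \<in> S"
    show "H (repair_state S t z) * pmf (\<beta> (s0, pre @ [t], x)) z = H z * pmf (\<beta> (s0, pre @ [t], x)) z"
      using supp by (cases "z \<in> set_pmf (\<beta> (s0, pre @ [t], x))") (auto simp: repair_state_def set_pmf_eq)
  qed
  finally show ?thesis unfolding H_def .
qed

lemma flow_choice_weighted_cost:
  assumes ts: "task_system S T d" and fin: "finite S" and fl: "flow S T \<pi>"
    and s0: "s0 \<in> S" and pre: "set pre \<subseteq> T" and t: "t \<in> T" and x: "x \<in> S" and z: "z \<in> S"
  shows "ennreal (state_mass S \<pi> s0 pre x) *
      ((ennreal (d x z) + t z + W) * ennreal (pmf (flow_choice S T \<pi> (s0, pre @ [t], x)) z))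
    = ennreal (\<pi> (s0, pre @ [t], x, z) * (d x z + enn2real (t z))) + ennreal (\<pi> (s0, pre @ [t], x, z)) * W"
proof -
  let ?p = "\<pi> (s0, pre @ [t], x, z)"
  have nn: "0 \<le> ?p" and dn: "0 \<le> d x z"
    using flow_nonneg[OF fl] task_system_dist_nonneg[OF ts x z] by auto
  have mass: "ennreal (state_mass S \<pi> s0 pre x) * ennreal (pmf (flow_choice S T \<pi> (s0, pre @ [t], x)) z)
      = ennreal ?p"
    using flow_choice(2)[OF ts fin fl s0 pre t x z] state_mass_nonneg[OF fl]
    by (simp flip: ennreal_mult)
  have move: "ennreal ?p * (ennreal (d x z) + t z) = ennreal (?p * (d x z + enn2real (t z)))"
  proof (cases "t z = \<top>")
    case True
    then show ?thesis using flow_infeasible_zero[OF fl s0 pre t x z] by simp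
  next
    case False
    then have "t z = ennreal (enn2real (t z))" by (simp add: less_top)
    then show ?thesis using nn dn by (metis enn2real_nonneg ennreal_mult ennreal_plus add_nonneg_nonneg)
  qed
  have "ennreal (state_mass S \<pi> s0 pre x) *
      ((ennreal (d x z) + t z + W) * ennreal (pmf (flow_choice S T \<pi> (s0, pre @ [t], x)) z))
      = ennreal ?p * (ennreal (d x z) + t z + W)"
    by (metis mass mult.assoc mult.commute)
  also have "\<dots> = ennreal ?p * (ennreal (d x z) + t z) + ennreal ?p * W"
    by (simp add: distrib_left)
  finally show ?thesis unfolding move .
qed

lemma expected_choice_cost_from_mass:
  assumes ts: "task_system S T d" and fin: "finite S" and fl: "flow S T \<pi>" and s0: "s0 \<in> S"
  shows "set pre \<subseteq> T \<Longrightarrow> set rest \<subseteq> T \<Longrightarrow>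
    (\<Sum>x\<in>S. ennreal (state_mass S \<pi> s0 pre x) *
       (\<integral>\<^sup>+gs. choice_cost S d gs s0 pre x rest \<partial>stream_space (choice_space (flow_choice S T \<pi>))))
     = ennreal (flow_cost S d \<pi> s0 pre rest)"
proof (induction rest arbitrary: pre)
  case Nil
  then show ?case by simp
next
  case (Cons t rest)
  define W where "W = (\<lambda>p y r. \<integral>\<^sup>+gs. choice_cost S d gs s0 p y r \<partial>stream_space (choice_space (flow_choice S T \<pi>)))"
  define pmf' where "pmf' = (\<lambda>x z. ennreal (pmf (flow_choice S T \<pi> (s0, pre @ [t], x)) z))"
  let ?p = "\<lambda>x z. \<pi> (s0, pre @ [t], x, z)"
  have t: "t \<in> T" and rest: "set rest \<subseteq> T" and pre: "set pre \<subseteq> T" and pre': "set (pre @ [t]) \<subseteq> T"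
    using Cons.prems by auto
  have nn: "\<And>i. 0 \<le> \<pi> i" using fl by (rule flow_nonneg)
  let ?A = "\<Sum>x\<in>S. \<Sum>z\<in>S. ?p x z * (d x z + enn2real (t z))"
  have "(\<Sum>x\<in>S. ennreal (state_mass S \<pi> s0 pre x) * W pre x (t # rest))
     = (\<Sum>x\<in>S. \<Sum>z\<in>S. ennreal (state_mass S \<pi> s0 pre x) *
          ((ennreal (d x z) + t z + W (pre @ [t]) z rest) * pmf' x z))"
    unfolding W_def pmf'_def
    by (intro sum.cong refl) (simp only: expected_choice_cost_Cons[OF ts fin fl s0 pre t] sum_distrib_left)
  also have "\<dots> = (\<Sum>x\<in>S. \<Sum>z\<in>S. ennreal (?p x z * (d x z + enn2real (t z))) + ennreal (?p x z) * W (pre @ [t]) z rest)"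
    unfolding pmf'_def by (intro sum.cong refl flow_choice_weighted_cost[OF ts fin fl s0 pre t])
  also have "\<dots> = (\<Sum>x\<in>S. \<Sum>z\<in>S. ennreal (?p x z * (d x z + enn2real (t z))))
      + (\<Sum>x\<in>S. \<Sum>z\<in>S. ennreal (?p x z) * W (pre @ [t]) z rest)"
    by (simp only: sum.distrib)
  also have "(\<Sum>x\<in>S. \<Sum>z\<in>S. ennreal (?p x z * (d x z + enn2real (t z)))) = ennreal ?A"
    using nn task_system_dist_nonneg[OF ts] by (simp add: sum_nonneg)
  also have "(\<Sum>x\<in>S. \<Sum>z\<in>S. ennreal (?p x z) * W (pre @ [t]) z rest)
      = (\<Sum>z\<in>S. \<Sum>x\<in>S. ennreal (?p x z) * W (pre @ [t]) z rest)"
    by (rule sum.swap)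
  also have "\<dots> = (\<Sum>z\<in>S. ennreal (state_mass S \<pi> s0 (pre @ [t]) z) * W (pre @ [t]) z rest)"
    using nn by (intro sum.cong refl) (simp add: state_mass_def sum_nonneg flip: sum_distrib_right)
  also have "\<dots> = ennreal (flow_cost S d \<pi> s0 (pre @ [t]) rest)"
    unfolding W_def by (rule Cons.IH[OF pre' rest])
  also have "ennreal ?A + \<dots> = ennreal (flow_cost S d \<pi> s0 pre (t # rest))"
    unfolding flow_cost_Cons
    by (rule ennreal_plus[symmetric])
       (use nn task_system_dist_nonneg[OF ts] flow_cost_nonneg[OF ts fl] in \<open>auto intro!: sum_nonneg\<close>)
  finally show ?case unfolding W_def .
qed

lemma expected_choice_cost:
  assumes "task_system S T d" "finite S" "flow S T \<pi>" "s0 \<in> S" "set ts \<subseteq> T"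
  shows "(\<integral>\<^sup>+gs. choice_cost S d gs s0 [] s0 ts \<partial>stream_space (choice_space (flow_choice S T \<pi>)))
    = ennreal (flow_cost S d \<pi> s0 [] ts)"
proof -
  define W where "W = (\<lambda>x. \<integral>\<^sup>+gs. choice_cost S d gs s0 [] x ts \<partial>stream_space (choice_space (flow_choice S T \<pi>)))"
  have "(\<Sum>x\<in>S. ennreal (state_mass S \<pi> s0 [] x) * W x) = (\<Sum>x\<in>S. if x = s0 then W x else 0)"
    by (intro sum.cong refl) (simp add: state_mass_def)
  also have "\<dots> = W s0" using assms(2,4) by simp
  finally show ?thesis
    using expected_choice_cost_from_mass[OF assms(1-4), of "[]" ts] assms(5) unfolding W_def by simp
qed

subsection \<open>The randomized algorithm of a flow\<close>

lemma nn_integral_distr_le: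
  assumes g: "g \<in> measurable M N" and h: "h \<in> borel_measurable N"
    and le: "\<And>x. x \<in> space N \<Longrightarrow> f x \<le> h x" and eq: "\<And>\<omega>. \<omega> \<in> space M \<Longrightarrow> h (g \<omega>) = f (g \<omega>)"
  shows "(\<integral>\<^sup>+x. f x \<partial>distr M N g) \<le> (\<integral>\<^sup>+\<omega>. f (g \<omega>) \<partial>M)"
proof -
  have "(\<integral>\<^sup>+x. f x \<partial>distr M N g) \<le> (\<integral>\<^sup>+x. h x \<partial>distr M N g)"
    by (rule nn_integral_mono) (simp add: le)
  also have "\<dots> = (\<integral>\<^sup>+\<omega>. h (g \<omega>) \<partial>M)" by (rule nn_integral_distr[OF g]) (use h in simp)
  also have "\<dots> = (\<integral>\<^sup>+\<omega>. f (g \<omega>) \<partial>M)" by (rule nn_integral_cong) (simp add: eq)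
  finally show ?thesis .
qed

lemma space_alg_space [simp]: "space alg_space = UNIV"
  unfolding alg_space_def by (simp add: space_PiM)

lemma measurable_alg_space_apply: "(\<lambda>D. D a) \<in> measurable alg_space (count_space UNIV)"
  unfolding alg_space_def by (rule measurable_component_singleton) simp

lemma sets_alg_space_apply: "{D. P (D a)} \<in> sets alg_space"
  using measurable_sets[OF measurable_alg_space_apply, of "{y. P y}" a] by (simp add: vimage_def)

lemma measurable_choice_alg: "finite S \<Longrightarrow> choice_alg S \<in> measurable (stream_space (choice_space \<beta>)) alg_space"
  unfolding alg_space_def choice_alg_def
  by (rule measurable_PiM_single'[where f="\<lambda>i gs. case i of (s0, ts) \<Rightarrow> choice_run S gs s0 [] s0 ts", simplified])
     (auto split: prod.split intro: measurable_choice_run)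

lemma sets_valid_det:
  assumes "finite S" "finite T"
  shows "{D \<in> space alg_space. valid_det S T D} \<in> sets alg_space"
proof -
  define X where "X = S \<times> {ts. set ts \<subseteq> T \<and> ts \<noteq> []}"
  have "countable X"
    by (rule countable_subset[of _ "S \<times> lists T"]) (use assms in \<open>auto simp: X_def intro: countable_finite\<close>)
  moreover have "{D \<in> space alg_space. valid_det S T D} =
      space alg_space - (\<Union>a\<in>X. {D. \<not> (D a \<in> S \<and> last (snd a) (D a) \<noteq> \<top>)})"
    unfolding valid_det_def X_def by fastforce
  ultimately show ?thesis
    by (simp only:) (intro sets.Diff sets.top sets.countable_UN'' sets_alg_space_apply)
qed

lemma opt_less_top:
  assumes ts: "task_system S T d" and "s0 \<in> S" "set tsl \<subseteq> T"
  shows "opt S d (s0, tsl) < \<top>"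
proof -
  define ss where "ss = map (feasible_state S) tsl"
  have feas: "\<And>t. t \<in> T \<Longrightarrow> feasible_state S t \<in> S \<and> t (feasible_state S t) \<noteq> \<top>"
    using feasible_state_feasible[OF ts] by blast
  have "opt S d (s0, tsl) \<le> path_cost d s0 tsl ss"
    unfolding opt_def fst_conv snd_conv using feas assms(3) by (intro INF_lower) (auto simp: ss_def)
  also have "\<dots> < \<top>"
    unfolding path_cost_def ss_def using feas assms(3) by (auto simp: less_top[symmetric]) (meson nth_mem subsetD)
  finally show ?thesis .
qed

text \<open>The states form an arbitrary type, so \<open>alg_cost d D \<sigma>\<close> need not be measurable in \<open>D\<close>
  for the product \<open>\<sigma>\<close>-algebra; it is dominated by a measurable function that agrees with it
  on all algorithms staying in \<open>S\<close>.\<close>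

lemma alg_cost_measurable_majorant:
  assumes fin: "finite S"
  obtains h where "h \<in> borel_measurable alg_space" and "\<And>D. alg_cost d D (s0, tsl) \<le> h D"
    and "\<And>D. s0 \<in> S \<Longrightarrow> (\<forall>i<length tsl. D (s0, take (Suc i) tsl) \<in> S) \<Longrightarrow> h D = alg_cost d D (s0, tsl)"
proof -
  define P where "P = (\<lambda>i (D::'a det_alg). if i = 0 then s0 else D (s0, take i tsl))"
  define Q where "Q = (\<lambda>i (D::'a det_alg). D (s0, take (Suc i) tsl))"
  define c where "c = (\<lambda>i x z. ennreal (d x z) + (tsl ! i) z)"
  define h where "h = (\<lambda>D. \<Sum>i<length tsl. (if P i D \<in> S \<and> Q i D \<in> S then
      (\<Sum>x\<in>S. \<Sum>z\<in>S. (if P i D = x \<and> Q i D = z then c i x z else 0)) else \<top>))"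
  have cost: "alg_cost d D (s0, tsl) = (\<Sum>i<length tsl. c i (P i D) (Q i D))" for D
    unfolding alg_cost_def path_cost_def alg_states_def c_def P_def Q_def
    by (intro sum.cong refl) (auto simp: nth_Cons')
  have mP: "P i \<in> measurable alg_space (count_space UNIV)" for i
    unfolding P_def by (cases "i = 0") (simp_all add: measurable_alg_space_apply)
  have mQ: "Q i \<in> measurable alg_space (count_space UNIV)" for i
    unfolding Q_def by (simp add: measurable_alg_space_apply)
  have [measurable]: "Measurable.pred alg_space (\<lambda>D. P i D \<in> S)" "Measurable.pred alg_space (\<lambda>D. Q i D \<in> S)" for i
    using measurable_compose[OF mP, of "\<lambda>y. y \<in> S"] measurable_compose[OF mQ, of "\<lambda>y. y \<in> S"] by simp_all
  note [measurable] = mP mQ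
  have "h \<in> borel_measurable alg_space"
    unfolding h_def by measurable
  moreover have diag: "(\<Sum>x\<in>S. \<Sum>z\<in>S. (if P i D = x \<and> Q i D = z then c i x z else 0)) = c i (P i D) (Q i D)"
    if "P i D \<in> S" "Q i D \<in> S" for i D
  proof -
    have "(\<Sum>x\<in>S. \<Sum>z\<in>S. (if P i D = x \<and> Q i D = z then c i x z else 0))
        = (\<Sum>x\<in>S. if P i D = x then c i x (Q i D) else 0)"
      by (intro sum.cong refl) (auto simp: fin that if_distrib cong: if_cong)
    also have "\<dots> = c i (P i D) (Q i D)" using that fin by simp
    finally show ?thesis .
  qed
  moreover have "alg_cost d D (s0, tsl) \<le> h D" for D
    unfolding cost h_def by (intro sum_mono) (auto simp: diag)
  moreover have "h D = alg_cost d D (s0, tsl)"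
    if "s0 \<in> S" "\<forall>i<length tsl. D (s0, take (Suc i) tsl) \<in> S" for D
  proof -
    have "P i D \<in> S \<and> Q i D \<in> S" if "i < length tsl" for i
      using \<open>s0 \<in> S\<close> \<open>\<forall>i<length tsl. D (s0, take (Suc i) tsl) \<in> S\<close> that unfolding P_def Q_def
      by (cases i) auto
    then show ?thesis unfolding cost h_def by (intro sum.cong refl) (auto simp: diag)
  qed
  ultimately show ?thesis using that by blast
qed

lemma ennreal_affine_le:
  assumes "0 \<le> \<alpha>" "x \<noteq> \<top>"
  shows "ennreal (c * enn2real x + \<alpha>) \<le> ennreal c * x + ennreal \<alpha>"
proof (cases "0 \<le> c")
  case True
  then show ?thesis using assms by (simp add: ennreal_mult ennreal_enn2real_if)
next
  case False
  then have "ennreal (c * enn2real x + \<alpha>) \<le> ennreal \<alpha>"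
    by (intro ennreal_leI) (simp add: mult_nonpos_nonneg)
  then show ?thesis by (simp add: add_increasing)
qed

lemma rand_competitive_of_flow:
  assumes ts: "task_system S T d" and fin: "finite S" and finT: "finite T" and fl: "flow S T \<pi>"
    and \<alpha>: "0 \<le> \<alpha>"
    and bound: "\<And>s0 tsl. s0 \<in> S \<Longrightarrow> set tsl \<subseteq> T \<Longrightarrow>
      flow_cost S d \<pi> s0 [] tsl \<le> c * enn2real (opt S d (s0, tsl)) + \<alpha>"
  shows "\<exists>M. rand_alg S T M \<and> rand_competitive S T d M c"
proof -
  define GS where "GS = stream_space (choice_space (flow_choice S T \<pi>))"
  define M where "M = distr GS alg_space (choice_alg S)"
  interpret G: prob_space "choice_space (flow_choice S T \<pi>)" by (rule prob_space_choice_space)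
  interpret GS: prob_space GS unfolding GS_def by (rule G.prob_space_stream_space)
  have mP: "choice_alg S \<in> measurable GS alg_space" unfolding GS_def by (rule measurable_choice_alg[OF fin])
  have "rand_alg S T M"
    unfolding rand_alg_def M_def
    using GS.prob_space_distr[OF mP] AE_distr_iff[OF mP sets_valid_det[OF fin finT]]
    by (simp add: valid_det_choice_alg[OF ts])
  moreover have "(\<integral>\<^sup>+D. alg_cost d D \<sigma> \<partial>M) \<le> ennreal c * opt S d \<sigma> + ennreal \<alpha>"
    if \<sigma>_in: "\<sigma> \<in> inputs S T" for \<sigma>
  proof -
    obtain s0 tsl where \<sigma>: "\<sigma> = (s0, tsl)" and s0: "s0 \<in> S" and tsl: "set tsl \<subseteq> T"
      using \<sigma>_in by (cases \<sigma>) (auto simp: inputs_def)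
    obtain h where hm: "h \<in> borel_measurable alg_space" and hle: "\<And>D. alg_cost d D (s0, tsl) \<le> h D"
      and heq: "\<And>D. s0 \<in> S \<Longrightarrow> (\<forall>i<length tsl. D (s0, take (Suc i) tsl) \<in> S) \<Longrightarrow> h D = alg_cost d D (s0, tsl)"
      using alg_cost_measurable_majorant[OF fin] by blast
    have "\<forall>i<length tsl. choice_alg S gs (s0, take (Suc i) tsl) \<in> S" for gs
    proof (intro allI impI)
      fix i assume "i < length tsl"
      then have "take (Suc i) tsl \<noteq> []" by (cases tsl) auto
      moreover have "set (take (Suc i) tsl) \<subseteq> T" using tsl by (meson order_trans set_take_subset)
      ultimately show "choice_alg S gs (s0, take (Suc i) tsl) \<in> S"
        unfolding choice_alg_def using choice_run_feasible[OF ts] by auto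
    qed
    then have "(\<integral>\<^sup>+D. alg_cost d D \<sigma> \<partial>M) \<le> (\<integral>\<^sup>+gs. alg_cost d (choice_alg S gs) (s0, tsl) \<partial>GS)"
      unfolding M_def \<sigma> by (intro nn_integral_distr_le[OF mP hm]) (use hle heq s0 in auto)
    also have "\<dots> = ennreal (flow_cost S d \<pi> s0 [] tsl)"
      unfolding alg_cost_choice_alg GS_def by (rule expected_choice_cost[OF ts fin fl s0 tsl])
    also have "\<dots> \<le> ennreal (c * enn2real (opt S d (s0, tsl)) + \<alpha>)"
      using bound[OF s0 tsl] by (rule ennreal_leI)
    also have "\<dots> \<le> ennreal c * opt S d \<sigma> + ennreal \<alpha>"
      unfolding \<sigma> using \<alpha> opt_less_top[OF ts s0 tsl] by (intro ennreal_affine_le) auto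
    finally show ?thesis .
  qed
  ultimately show ?thesis unfolding rand_competitive_def using \<alpha> by blast
qed

subsection \<open>A minimax lemma\<close>

lemma max_zero_add_square_le:
  fixes a b t :: real
  assumes "0 \<le> t"
  shows "(max 0 (a + t * b))\<^sup>2 \<le> (max 0 a)\<^sup>2 + 2 * t * (max 0 a * b) + t\<^sup>2 * b\<^sup>2"
proof (cases "0 \<le> a")
  case True
  then have "(max 0 (a + t * b))\<^sup>2 \<le> (a + t * b)\<^sup>2"
    by (cases "0 \<le> a + t * b") (auto simp: max_def)
  also have "\<dots> = (max 0 a)\<^sup>2 + 2 * t * (max 0 a * b) + t\<^sup>2 * b\<^sup>2"
    using True by (simp add: max_def power2_eq_square algebra_simps)
  finally show ?thesis .
next
  case False
  show ?thesis
  proof (cases "0 \<le> a + t * b")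
    case True
    with False have "(a + t * b)\<^sup>2 \<le> (t * b)\<^sup>2" by (intro power_mono) auto
    then show ?thesis using True False by (simp add: max_def power_mult_distrib)
  next
    case False
    then show ?thesis using \<open>\<not> 0 \<le> a\<close> by (simp add: max_def)
  qed
qed

lemma nonneg_if_quadratic_nonneg_near_zero:
  fixes A B :: real
  assumes "\<And>t. 0 < t \<Longrightarrow> t \<le> 1 \<Longrightarrow> 0 \<le> 2 * t * A + t\<^sup>2 * B"
  shows "0 \<le> A"
proof (rule ccontr)
  assume "\<not> 0 \<le> A"
  then have A: "A < 0" by simp
  show False
  proof (cases "B \<le> 0")
    case True
    then show False using assms[of 1] A by simp
  next
    case False
    define t where "t = min 1 (- A / B)"
    have t0: "0 < t" and t1: "t \<le> 1" unfolding t_def using A False by (simp_all add: field_simps)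
    have "t * B \<le> - A" unfolding t_def using False by (simp add: min_def field_simps)
    then have "t * (t * B) \<le> t * (- A)" using t0 by (intro mult_left_mono) auto
    then have "2 * t * A + t\<^sup>2 * B \<le> t * A" by (simp add: power2_eq_square algebra_simps)
    also have "\<dots> < 0" using t0 A by (simp add: mult_pos_neg)
    finally show False using assms[OF t0 t1] by simp
  qed
qed

text \<open>A point minimising \<open>g = \<Sum>k. (max 0 (v k))\<^sup>2\<close> over \<open>F\<close> is the sought common point: otherwise
  the weights \<open>w k = max 0 (v k a)\<close> have a point where \<open>\<Sum>k. w k * v k\<close> is negative, and moving
  towards it decreases \<open>g\<close> to first order.\<close>

lemma compact_convex_affine_minimax:
  fixes F :: "('i \<Rightarrow> real) set" and v :: "'k \<Rightarrow> ('i \<Rightarrow> real) \<Rightarrow> real" and K :: "'k set"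
  assumes cF: "compact F" and neF: "F \<noteq> {}" and fK: "finite K"
    and conv: "\<And>a b t. a \<in> F \<Longrightarrow> b \<in> F \<Longrightarrow> 0 \<le> t \<Longrightarrow> t \<le> 1 \<Longrightarrow> (\<lambda>i. a i + t * (b i - a i)) \<in> F"
    and aff: "\<And>k a b t. k \<in> K \<Longrightarrow> a \<in> F \<Longrightarrow> b \<in> F \<Longrightarrow>
      v k (\<lambda>i. a i + t * (b i - a i)) = v k a + t * (v k b - v k a)"
    and cont: "\<And>k. k \<in> K \<Longrightarrow> continuous_on F (v k)"
    and weighted_neg: "\<And>w. (\<forall>k\<in>K. 0 \<le> w k) \<Longrightarrow> 0 < (\<Sum>k\<in>K. w k) \<Longrightarrow> \<exists>a\<in>F. (\<Sum>k\<in>K. w k * v k a) < 0"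
  shows "\<exists>a\<in>F. \<forall>k\<in>K. v k a \<le> 0"
proof -
  define g where "g = (\<lambda>a. \<Sum>k\<in>K. (max 0 (v k a))\<^sup>2)"
  have "continuous_on F g" unfolding g_def by (intro continuous_intros cont)
  then obtain a where aF: "a \<in> F" and amin: "\<And>b. b \<in> F \<Longrightarrow> g a \<le> g b"
    using continuous_attains_inf[OF cF neF] by blast
  define w where "w = (\<lambda>k. max 0 (v k a))"
  have w0: "\<forall>k\<in>K. 0 \<le> w k" unfolding w_def by simp
  have ga: "g a = (\<Sum>k\<in>K. w k * v k a)"
    unfolding g_def w_def by (intro sum.cong refl) (simp add: max_def power2_eq_square)
  show ?thesis
  proof (cases "\<forall>k\<in>K. w k = 0")
    case True
    then show ?thesis using aF unfolding w_def by (metis max.cobounded2)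
  next
    case False
    then have wpos: "0 < (\<Sum>k\<in>K. w k)" using w0 fK by (metis sum_nonneg less_eq_real_def sum_nonneg_eq_0_iff)
    have gpos: "0 < g a"
      using False fK unfolding g_def w_def by (auto simp: less_le sum_nonneg sum_nonneg_eq_0_iff max_def)
    have g_le: "g a \<le> (\<Sum>k\<in>K. w k * v k b)" if bF: "b \<in> F" for b
    proof -
      define A where "A = (\<Sum>k\<in>K. w k * (v k b - v k a))"
      define B where "B = (\<Sum>k\<in>K. (v k b - v k a)\<^sup>2)"
      have "0 \<le> 2 * t * A + t\<^sup>2 * B" if t: "0 < t" "t \<le> 1" for t
      proof -
        have "g a \<le> g (\<lambda>i. a i + t * (b i - a i))" using conv[OF aF bF, of t] t amin by simp
        also have "\<dots> = (\<Sum>k\<in>K. (max 0 (v k a + t * (v k b - v k a)))\<^sup>2)"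
          unfolding g_def using aff aF bF by simp
        also have "\<dots> \<le> (\<Sum>k\<in>K. (max 0 (v k a))\<^sup>2 + 2 * t * (w k * (v k b - v k a)) + t\<^sup>2 * (v k b - v k a)\<^sup>2)"
          unfolding w_def using t by (intro sum_mono max_zero_add_square_le) auto
        also have "\<dots> = g a + 2 * t * A + t\<^sup>2 * B"
          unfolding g_def A_def B_def by (simp add: sum.distrib sum_distrib_left)
        finally show ?thesis by simp
      qed
      then have "0 \<le> A" by (rule nonneg_if_quadratic_nonneg_near_zero)
      then show ?thesis unfolding ga A_def by (simp add: right_diff_distrib sum_subtractf)
    qed
    obtain b where "b \<in> F" and "(\<Sum>k\<in>K. w k * v k b) < 0" using weighted_neg[OF w0 wpos] by blast
    then show ?thesis using g_le gpos by force
  qed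
qed

subsection \<open>Deterministic algorithms as flows\<close>

definition alg_state :: "'s det_alg \<Rightarrow> 's \<Rightarrow> 's task list \<Rightarrow> 's" where
  "alg_state D s0 ts = (if ts = [] then s0 else D (s0, ts))"

definition alg_flow :: "'s det_alg \<Rightarrow> 's flow" where
  "alg_flow D = (\<lambda>(s0, ts, x, z).
     if ts \<noteq> [] \<and> x = alg_state D s0 (butlast ts) \<and> z = alg_state D s0 ts then 1 else 0)"

lemma alg_state_in:
  assumes "valid_det S T D" "s0 \<in> S" "set ts \<subseteq> T"
  shows "alg_state D s0 ts \<in> S"
  using assms unfolding alg_state_def valid_det_def by auto

lemma valid_det_exists:
  assumes "task_system S T d"
  shows "\<exists>D. valid_det S T D"
proof
  show "valid_det S T (\<lambda>(s0, ts). feasible_state S (last ts))"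
    unfolding valid_det_def using feasible_state_feasible[OF assms] last_in_set by fastforce
qed

lemma flow_alg_flow:
  assumes fin: "finite S" and v: "valid_det S T D"
  shows "flow S T (alg_flow D)"
  unfolding flow_def
proof (intro conjI ballI allI impI)
  fix i show "0 \<le> alg_flow D i" "alg_flow D i \<le> 1" unfolding alg_flow_def by (auto split: prod.split)
next
  fix s0 pre t x assume s0: "s0 \<in> S" and pre: "set pre \<subseteq> T" and t: "t \<in> T" and x: "x \<in> S"
  have "alg_state D s0 (pre @ [t]) \<in> S" using alg_state_in[OF v s0, of "pre @ [t]"] pre t by auto
  then have "(\<Sum>z\<in>S. alg_flow D (s0, pre @ [t], x, z)) = (if x = alg_state D s0 pre then 1 else 0)"
    unfolding alg_flow_def using fin by simp
  also have "\<dots> = state_mass S (alg_flow D) s0 pre x"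
  proof (cases "pre = []")
    case True
    then show ?thesis by (simp add: state_mass_def alg_state_def)
  next
    case False
    have "alg_state D s0 (butlast pre) \<in> S"
      using alg_state_in[OF v s0, of "butlast pre"] pre by (meson in_set_butlastD subset_code(1))
    then show ?thesis
      unfolding state_mass_def alg_flow_def using False fin by simp
  qed
  finally show "(\<Sum>z\<in>S. alg_flow D (s0, pre @ [t], x, z)) = state_mass S (alg_flow D) s0 pre x" .
next
  fix s0 pre t x z assume s0: "s0 \<in> S" and pre: "set pre \<subseteq> T" and t: "t \<in> T" and "t z = \<top>"
  have "set (pre @ [t]) \<subseteq> T \<and> pre @ [t] \<noteq> []" using pre t by simp
  then have "last (pre @ [t]) (D (s0, pre @ [t])) \<noteq> \<top>"
    using v s0 unfolding valid_det_def by blast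
  then show "alg_flow D (s0, pre @ [t], x, z) = 0"
    using \<open>t z = \<top>\<close> unfolding alg_flow_def alg_state_def by auto
qed

lemma flow_cost_alg_flow:
  assumes ts: "task_system S T d" and fin: "finite S" and v: "valid_det S T D"
    and s0: "s0 \<in> S" and tsl: "set tsl \<subseteq> T"
  shows "flow_cost S d (alg_flow D) s0 [] tsl = enn2real (alg_cost d D (s0, tsl))"
proof -
  define a where "a = (\<lambda>i. alg_state D s0 (take i tsl))"
  have a_in: "a i \<in> S" for i
    unfolding a_def using alg_state_in[OF v s0] tsl by (meson order_trans set_take_subset)
  have finite_task: "(tsl ! i) (a (Suc i)) \<noteq> \<top>" if "i < length tsl" for i
  proof -
    have "take (Suc i) tsl \<noteq> []" using that by (cases tsl) auto
    moreover have "set (take (Suc i) tsl) \<subseteq> T" using tsl by (meson order_trans set_take_subset)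
    ultimately have "last (take (Suc i) tsl) (D (s0, take (Suc i) tsl)) \<noteq> \<top>"
      using v s0 unfolding valid_det_def by blast
    moreover have "last (take (Suc i) tsl) = tsl ! i" using that by (simp add: take_Suc_conv_app_nth)
    ultimately show ?thesis using \<open>take (Suc i) tsl \<noteq> []\<close> unfolding a_def alg_state_def by simp
  qed
  have "flow_cost S d (alg_flow D) s0 [] tsl = (\<Sum>i<length tsl. d (a i) (a (Suc i)) + enn2real ((tsl ! i) (a (Suc i))))"
    unfolding flow_cost_def
  proof (intro sum.cong refl)
    fix i assume i: "i \<in> {..<length tsl}"
    have "butlast (take (Suc i) tsl) = take i tsl" "take (Suc i) tsl \<noteq> []"
      using i by (auto simp: take_Suc_conv_app_nth)
    then have "(\<Sum>x\<in>S. \<Sum>z\<in>S. alg_flow D (s0, [] @ take (Suc i) tsl, x, z) * (d x z + enn2real ((tsl ! i) z)))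
      = (\<Sum>x\<in>S. \<Sum>z\<in>S. if x = a i \<and> z = a (Suc i) then d x z + enn2real ((tsl ! i) z) else 0)"
      unfolding alg_flow_def a_def by (intro sum.cong refl) auto
    also have "\<dots> = (\<Sum>x\<in>S. if x = a i then d x (a (Suc i)) + enn2real ((tsl ! i) (a (Suc i))) else 0)"
      using a_in fin by (intro sum.cong refl) (auto simp: if_distrib cong: if_cong)
    also have "\<dots> = d (a i) (a (Suc i)) + enn2real ((tsl ! i) (a (Suc i)))"
      using a_in fin by simp
    finally show "(\<Sum>x\<in>S. \<Sum>z\<in>S. alg_flow D (s0, [] @ take (Suc i) tsl, x, z) * (d x z + enn2real ((tsl ! i) z)))
        = d (a i) (a (Suc i)) + enn2real ((tsl ! i) (a (Suc i)))" .
  qed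
  also have "\<dots> = (\<Sum>i<length tsl. enn2real (ennreal (d (a i) (a (Suc i))) + (tsl ! i) (a (Suc i))))"
    using finite_task task_system_dist_nonneg[OF ts a_in a_in]
    by (intro sum.cong refl) (simp add: enn2real_plus less_top)
  also have "\<dots> = enn2real (\<Sum>i<length tsl. ennreal (d (a i) (a (Suc i))) + (tsl ! i) (a (Suc i)))"
    using finite_task by (subst enn2real_sum) (auto simp: less_top)
  also have "(\<Sum>i<length tsl. ennreal (d (a i) (a (Suc i))) + (tsl ! i) (a (Suc i))) = alg_cost d D (s0, tsl)"
    unfolding alg_cost_def path_cost_def alg_states_def a_def alg_state_def
    by (intro sum.cong refl) (auto simp: nth_Cons')
  finally show ?thesis .
qed

subsection \<open>The space of flows\<close>

lemma state_mass_segment: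
  "state_mass S (\<lambda>i. a i + t * (b i - a i)) s0 ts z
    = state_mass S a s0 ts z + t * (state_mass S b s0 ts z - state_mass S a s0 ts z)"
  unfolding state_mass_def by (simp add: sum.distrib sum_distrib_left sum_subtractf algebra_simps)

lemma flow_cost_segment:
  "flow_cost S d (\<lambda>i. a i + t * (b i - a i)) s0 pre rest
    = flow_cost S d a s0 pre rest + t * (flow_cost S d b s0 pre rest - flow_cost S d a s0 pre rest)"
  unfolding flow_cost_def by (simp add: sum.distrib sum_distrib_left sum_subtractf algebra_simps)

lemma flow_segment:
  assumes a: "flow S T a" and b: "flow S T b" and t: "0 \<le> t" "t \<le> 1"
  shows "flow S T (\<lambda>i. a i + t * (b i - a i))"
  unfolding flow_def
proof (intro conjI ballI allI impI)
  fix i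
  have "a i + t * (b i - a i) = (1 - t) * a i + t * b i" by (simp add: algebra_simps)
  then show "0 \<le> a i + t * (b i - a i)" "a i + t * (b i - a i) \<le> 1"
    using flow_nonneg[OF a, of i] flow_le_one[OF a, of i] flow_nonneg[OF b, of i] flow_le_one[OF b, of i] t
    by (smt (verit, best) mult_left_le mult_nonneg_nonneg)+
next
  fix s0 pre t' x assume h: "s0 \<in> S" "set pre \<subseteq> T" "t' \<in> T" "x \<in> S"
  show "(\<Sum>z\<in>S. a (s0, pre @ [t'], x, z) + t * (b (s0, pre @ [t'], x, z) - a (s0, pre @ [t'], x, z)))
      = state_mass S (\<lambda>i. a i + t * (b i - a i)) s0 pre x"
    unfolding state_mass_segment flow_conservation[OF a h, symmetric] flow_conservation[OF b h, symmetric]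
    by (simp add: sum.distrib sum_distrib_left[symmetric] sum_subtractf)
next
  fix s0 pre t' x z assume "s0 \<in> S" "set pre \<subseteq> T" "t' \<in> T" "x \<in> S" "z \<in> S" "t' z = \<top>"
  then show "a (s0, pre @ [t'], x, z) + t * (b (s0, pre @ [t'], x, z) - a (s0, pre @ [t'], x, z)) = 0"
    using flow_infeasible_zero[OF a] flow_infeasible_zero[OF b] by simp
qed

lemma continuous_on_apply [continuous_intros]: "continuous_on A (\<lambda>\<pi>::'i \<Rightarrow> real. \<pi> i)"
  by (rule continuous_on_subset[OF continuous_on_product_coordinates]) simp

lemma continuous_on_flow_cost [continuous_intros]: "continuous_on A (\<lambda>\<pi>. flow_cost S d \<pi> s0 pre rest)"
  unfolding flow_cost_def by (intro continuous_intros)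

lemma continuous_on_state_mass [continuous_intros]: "continuous_on A (\<lambda>\<pi>. state_mass S \<pi> s0 ts z)"
  unfolding state_mass_def by (cases "ts = []") (simp, simp, intro continuous_intros)

lemma closed_flows: "closed {\<pi>. flow S T \<pi>}"
  unfolding flow_def Ball_def
  by (intro closed_Collect_conj closed_Collect_all closed_Collect_imp open_Collect_const
        closed_Collect_eq closed_Collect_le continuous_intros)

lemma compact_flows: "compact {\<pi>. flow S T \<pi>}"
proof -
  have "compactin (product_topology (\<lambda>_. euclidean) UNIV) (PiE UNIV (\<lambda>_::'a \<times> 'a task list \<times> 'a \<times> 'a. {0..1::real}))"
    by (simp add: compactin_PiE)
  then have "compact (PiE UNIV (\<lambda>_::'a \<times> 'a task list \<times> 'a \<times> 'a. {0..1::real}))"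
    by (simp add: euclidean_product_topology)
  moreover have "{\<pi>. flow S T \<pi>} = PiE UNIV (\<lambda>_. {0..1}) \<inter> {\<pi>. flow S T \<pi>}"
    unfolding flow_def by (auto simp: PiE_UNIV_domain)
  ultimately show ?thesis using compact_Int_closed closed_flows by metis
qed

subsection \<open>From hard input distributions to competitive flows\<close>

lemma weighted_pmf_exists:
  fixes w :: "'a \<Rightarrow> real"
  assumes fin: "finite I" and w0: "\<forall>x\<in>I. 0 \<le> w x" and wpos: "0 < sum w I"
  obtains p where "set_pmf p \<subseteq> I"
    and "\<And>g :: 'a \<Rightarrow> real. measure_pmf.expectation p g = (\<Sum>x\<in>I. w x * g x) / sum w I"
proof -
  define f where "f = (\<lambda>x. if x \<in> I then w x / sum w I else 0)"
  have fnn: "\<And>x. 0 \<le> f x" unfolding f_def using w0 wpos by auto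
  have "(\<integral>\<^sup>+x. ennreal (f x) \<partial>count_space UNIV) = (\<Sum>x\<in>I. ennreal (f x))"
    by (rule nn_integral_count_space') (auto simp: fin f_def)
  also have "\<dots> = ennreal (\<Sum>x\<in>I. f x)" using fnn by simp
  also have "(\<Sum>x\<in>I. f x) = 1"
    unfolding f_def using wpos by (simp add: sum_divide_distrib[symmetric])
  finally have int1: "(\<integral>\<^sup>+x. ennreal (f x) \<partial>count_space UNIV) = 1" by simp
  define p where "p = embed_pmf f"
  have pmf_p: "pmf p x = f x" for x unfolding p_def by (rule pmf_embed_pmf[OF fnn int1])
  have "set_pmf p = {x. f x \<noteq> 0}" unfolding p_def by (rule set_embed_pmf[OF fnn int1])
  then have supp: "set_pmf p \<subseteq> I" unfolding f_def by auto
  have "measure_pmf.expectation p g = (\<Sum>x\<in>I. w x * g x) / sum w I" for g :: "'a \<Rightarrow> real"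
    using supp by (subst integral_measure_pmf[OF fin])
      (auto simp: pmf_p f_def sum_divide_distrib)
  with supp show ?thesis using that by blast
qed

text \<open>The contrapositive of Yao's principle on finitely many inputs: if every distribution on
  inputs admits a deterministic algorithm beating the bound \<open>B\<close> in expectation, some flow beats
  \<open>B\<close> on every input of \<open>I\<close>. Deterministic algorithms enter only through their flows, and the
  expected cost is affine in the flow, so the minimax lemma applies.\<close>

lemma flow_bounded_on_finite_inputs:
  assumes ts: "task_system S T d" and fin: "finite S" and finI: "finite I" and I: "I \<subseteq> inputs S T"
    and beaten: "\<And>p. finite (set_pmf p) \<Longrightarrow> set_pmf p \<subseteq> inputs S T \<Longrightarrow> \<exists>D. valid_det S T D \<and>
      measure_pmf.expectation p (\<lambda>\<sigma>. enn2real (alg_cost d D \<sigma>)) < measure_pmf.expectation p B"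
  shows "\<exists>\<pi>. flow S T \<pi> \<and> (\<forall>\<sigma>\<in>I. flow_cost S d \<pi> (fst \<sigma>) [] (snd \<sigma>) \<le> B \<sigma>)"
proof -
  define v where "v = (\<lambda>\<sigma> \<pi>. flow_cost S d \<pi> (fst \<sigma>) [] (snd \<sigma>) - B \<sigma>)"
  have "\<exists>\<pi>\<in>{\<pi>. flow S T \<pi>}. \<forall>\<sigma>\<in>I. v \<sigma> \<pi> \<le> 0"
  proof (rule compact_convex_affine_minimax[OF compact_flows _ finI])
    show "{\<pi>. flow S T \<pi>} \<noteq> {}" using valid_det_exists[OF ts] flow_alg_flow[OF fin] by blast
  next
    fix w :: "_ \<Rightarrow> real"
    assume w0: "\<forall>\<sigma>\<in>I. 0 \<le> w \<sigma>" and wpos: "0 < (\<Sum>\<sigma>\<in>I. w \<sigma>)"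
    obtain p where supp: "set_pmf p \<subseteq> I"
      and E: "\<And>g :: _ \<Rightarrow> real. measure_pmf.expectation p g = (\<Sum>\<sigma>\<in>I. w \<sigma> * g \<sigma>) / sum w I"
      using weighted_pmf_exists[OF finI w0 wpos] by blast
    obtain D where D: "valid_det S T D"
      and "measure_pmf.expectation p (\<lambda>\<sigma>. enn2real (alg_cost d D \<sigma>)) < measure_pmf.expectation p B"
      using beaten[of p] supp I finite_subset[OF supp finI] by blast
    then have "(\<Sum>\<sigma>\<in>I. w \<sigma> * enn2real (alg_cost d D \<sigma>)) < (\<Sum>\<sigma>\<in>I. w \<sigma> * B \<sigma>)"
      unfolding E using wpos by (simp add: divide_less_cancel)
    moreover have "w \<sigma> * v \<sigma> (alg_flow D) = w \<sigma> * enn2real (alg_cost d D \<sigma>) - w \<sigma> * B \<sigma>" if "\<sigma> \<in> I" for \<sigma>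
      using that I flow_cost_alg_flow[OF ts fin D, of "fst \<sigma>" "snd \<sigma>"]
      by (auto simp: v_def inputs_def right_diff_distrib)
    ultimately have "(\<Sum>\<sigma>\<in>I. w \<sigma> * v \<sigma> (alg_flow D)) < 0"
      by (simp add: sum_subtractf)
    then show "\<exists>\<pi>\<in>{\<pi>. flow S T \<pi>}. (\<Sum>\<sigma>\<in>I. w \<sigma> * v \<sigma> \<pi>) < 0"
      using flow_alg_flow[OF fin D] by blast
  next
    fix a b :: "'a flow" and t :: real
    assume "a \<in> {\<pi>. flow S T \<pi>}" "b \<in> {\<pi>. flow S T \<pi>}" "0 \<le> t" "t \<le> 1"
    then show "(\<lambda>i. a i + t * (b i - a i)) \<in> {\<pi>. flow S T \<pi>}" by (simp add: flow_segment)
  next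
    fix \<sigma> and a b :: "'a flow" and t :: real
    show "v \<sigma> (\<lambda>i. a i + t * (b i - a i)) = v \<sigma> a + t * (v \<sigma> b - v \<sigma> a)"
      unfolding v_def flow_cost_segment by (simp add: algebra_simps)
  next
    fix \<sigma>
    show "continuous_on {\<pi>. flow S T \<pi>} (v \<sigma>)" unfolding v_def by (intro continuous_intros)
  qed
  then show ?thesis unfolding v_def by auto
qed

lemma flow_bounded_on_inputs:
  assumes ts: "task_system S T d" and fin: "finite S" and finT: "finite T"
    and beaten: "\<And>p. finite (set_pmf p) \<Longrightarrow> set_pmf p \<subseteq> inputs S T \<Longrightarrow> \<exists>D. valid_det S T D \<and>
      measure_pmf.expectation p (\<lambda>\<sigma>. enn2real (alg_cost d D \<sigma>)) < measure_pmf.expectation p B"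
  shows "\<exists>\<pi>. flow S T \<pi> \<and> (\<forall>\<sigma>\<in>inputs S T. flow_cost S d \<pi> (fst \<sigma>) [] (snd \<sigma>) \<le> B \<sigma>)"
proof -
  define I where "I = (\<lambda>n. {\<sigma> \<in> inputs S T. length (snd \<sigma>) \<le> n})"
  define G where "G = (\<lambda>n. {\<pi>. \<forall>\<sigma>\<in>I n. flow_cost S d \<pi> (fst \<sigma>) [] (snd \<sigma>) \<le> B \<sigma>})"
  have finI: "finite (I n)" for n
  proof -
    have "I n = S \<times> {ts. set ts \<subseteq> T \<and> length ts \<le> n}" unfolding I_def inputs_def by auto
    then show ?thesis using fin finT by (simp add: finite_lists_length_le)
  qed
  have "{\<pi>. flow S T \<pi>} \<inter> \<Inter>(range G) \<noteq> {}"
  proof (rule compact_fip[THEN iffD1, OF compact_flows, rule_format])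
    have "closed (G n)" for n
      unfolding G_def Ball_def
      by (intro closed_Collect_all closed_Collect_imp open_Collect_const closed_Collect_le continuous_intros)
    then show "closed A" if "A \<in> range G" for A
      using that by blast
  next
    fix Gs assume "Gs \<subseteq> range G" "finite Gs"
    then obtain N where N: "finite N" "Gs = G ` N" by (meson finite_subset_image)
    define m where "m = Max (insert 0 N)"
    have "G m \<subseteq> G n" if "n \<in> N" for n
    proof -
      have "n \<le> m" using N(1) that unfolding m_def by simp
      then show ?thesis unfolding G_def I_def by auto
    qed
    moreover obtain \<pi> where "flow S T \<pi>" "\<pi> \<in> G m"
      using flow_bounded_on_finite_inputs[OF ts fin finI, of m] beaten unfolding G_def I_def by blast
    ultimately show "{\<pi>. flow S T \<pi>} \<inter> \<Inter>Gs \<noteq> {}" using N(2) by blast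
  qed
  then obtain \<pi> where "flow S T \<pi>" and "\<And>n. \<pi> \<in> G n" by blast
  moreover have "\<sigma> \<in> I (length (snd \<sigma>))" if "\<sigma> \<in> inputs S T" for \<sigma>
    using that unfolding I_def by simp
  ultimately show ?thesis unfolding G_def by blast
qed

lemma expectation_affine_finite_pmf:
  assumes "finite (set_pmf p)"
  shows "measure_pmf.expectation p (\<lambda>x. a * f x + b) = a * measure_pmf.expectation p f + (b :: real)"
  using assms by (simp add: integrable_measure_pmf_finite)

theorem theorem6:
  fixes S :: "'s set" and T :: "'s task set" and d :: "'s \<Rightarrow> 's \<Rightarrow> real"
  assumes "lazy_task_system S T d" and "finite S" and "finite T"
  shows "compact_problem S T d"
  unfolding compact_problem_def
proof (intro allI impI)
  fix c \<epsilon> \<alpha> :: real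
  assume lower_bound: "1 < c \<and> (\<forall>M. rand_alg S T M \<longrightarrow> (\<forall>c'<c. \<not> rand_competitive S T d M c'))"
    and \<epsilon>: "0 < \<epsilon>" and \<alpha>: "0 \<le> \<alpha>"
  have ts: "task_system S T d" using assms(1) unfolding lazy_task_system_def by blast
  define B where "B = (\<lambda>\<sigma>. (c - \<epsilon>) * enn2real (opt S d \<sigma>) + \<alpha>)"
  show "\<exists>p. finite (set_pmf p) \<and> set_pmf p \<subseteq> inputs S T \<and> (\<forall>D. valid_det S T D \<longrightarrow>
      (c - \<epsilon>) * measure_pmf.expectation p (\<lambda>\<sigma>. enn2real (opt S d \<sigma>)) + \<alpha>
        \<le> measure_pmf.expectation p (\<lambda>\<sigma>. enn2real (alg_cost d D \<sigma>)))"
  proof (rule ccontr)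
    assume "\<not> ?thesis"
    then have "\<exists>D. valid_det S T D \<and>
        measure_pmf.expectation p (\<lambda>\<sigma>. enn2real (alg_cost d D \<sigma>)) < measure_pmf.expectation p B"
      if "finite (set_pmf p)" "set_pmf p \<subseteq> inputs S T" for p
      using that unfolding B_def expectation_affine_finite_pmf[OF that(1)] by (auto simp: not_le)
    then obtain \<pi> where "flow S T \<pi>" and "\<forall>\<sigma>\<in>inputs S T. flow_cost S d \<pi> (fst \<sigma>) [] (snd \<sigma>) \<le> B \<sigma>"
      using flow_bounded_on_inputs[OF ts assms(2,3)] by blast
    then obtain M where "rand_alg S T M" "rand_competitive S T d M (c - \<epsilon>)"
      using rand_competitive_of_flow[OF ts assms(2,3) _ \<alpha>, of \<pi> "c - \<epsilon>"] unfolding B_def inputs_def by auto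
    then show False using lower_bound \<epsilon> by force
  qed
qed

end
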